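(* Two weights $\lambda=(\lambda^L,\lambda^R),\mu=(\mu^L,\mu^R)\in\Lambda_{r,s}$ are $\delta$-balanced if and only if $p\big(c(\lambda,1),\dots,c(\lambda,r+s)\big)=p\big(c(\mu,1),\dots,c(\mu,r+s)\big)$ for every $p\in S_{r,s}[x;y]$.
   Context: $r,s\ge0$, $\delta\in\mathbb C$. $\Lambda^t_{r,s}$: pairs of partitions $(\lambda^L,\lambda^R)$ with $|\lambda^L|=r-t$, $|\lambda^R|=s-t$; $\Lambda_{r,s}=\bigsqcup_{t=0}^{\min(r,s)}\Lambda^t_{r,s}$. $[\nu]$ is the Young diagram of $\nu$; the content of the box in row $a$, column $b$ is $b-a$. $\mathrm{cont}(\nu,i)$ is the content of the box containing $i$ in the row-reading standard tableau of shape $\nu$. For $\lambda\in\Lambda^t_{r,s}$: $c(\lambda,i)=\mathrm{cont}(\lambda^L,i)$ ($1\le i\le r-t$), $0$ ($r-t<i\le r+t$), $\mathrm{cont}(\lambda^R,i-r-t)+\delta$ ($r+t<i\le r+s$). $\lambda,\mu$ are $\delta$-balanced if there is a pairing of the boxes of $[\lambda^L]\setminus([\lambda^L]\cap[\mu^L])$ with those of $[\lambda^R]\setminus([\lambda^R]\cap[\mu^R])$, and a pairing of the boxes of $[\mu^L]\setminus([\lambda^L]\cap[\mu^L])$ with those of $[\mu^R]\setminus([\lambda^R]\cap[\mu^R])$, such that the contents in each pair sum to $-\delta$. $S_{r,s}[x;y]$ is the algebra of polynomials in $x_1,\dots,x_r,y_1,\dots,y_s$ symmetric in the $x$'s and separately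 in the $y$'s such that $x_r=-y_1=t$ yields a polynomial independent of $t$; evaluation at $(a_1,\dots,a_{r+s})$ sets $x_i=a_i$, $y_j=a_{r+j}$. *)

theory Defs
  imports Complex_Main "HOL-Combinatorics.Permutations"
begin

definition is_partition :: "nat list \<Rightarrow> bool" where
  "is_partition \<nu> \<longleftrightarrow> sorted_wrt (\<ge>) \<nu> \<and> (\<forall>x\<in>set \<nu>. 0 < x)"

abbreviation psize :: "nat list \<Rightarrow> nat" where
  "psize \<nu> \<equiv> sum_list \<nu>"

text \<open>Young diagram: boxes (row a, column b), 1-based.\<close>
definition young :: "nat list \<Rightarrow> (nat \<times> nat) set" where
  "young \<nu> = {(a, b). 1 \<le> a \<and> a \<le> length \<nu> \<and> 1 \<le> b \<and> b \<le> \<nu> ! (a - 1)}"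

definition content :: "nat \<times> nat \<Rightarrow> int" where
  "content ab = int (snd ab) - int (fst ab)"

text \<open>Boxes listed in row-reading order (rows top to bottom, left to right):
  the box at position i (1-based) contains i in the row-reading standard tableau.\<close>
definition row_reading :: "nat list \<Rightarrow> (nat \<times> nat) list" where
  "row_reading \<nu> = concat (map (\<lambda>a. map (\<lambda>b. (a, b)) [1..<Suc (\<nu> ! (a - 1))]) [1..<Suc (length \<nu>)])"

definition cont :: "nat list \<Rightarrow> nat \<Rightarrow> int" where
  "cont \<nu> i = content (row_reading \<nu> ! (i - 1))"

definition Lambda :: "nat \<Rightarrow> nat \<Rightarrow> (nat list \<times> nat list) set" where
  "Lambda r s = {(L, R). is_partition L \<and> is_partition R \<and>
      (\<exists>t. t \<le> min r s \<and> psize L = r - t \<and> psize R = s - t)}"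

text \<open>The evaluation point (c(lambda,1), ..., c(lambda,r+s)), stored 0-based:
  coordinate j holds c(lambda, j+1).  Coordinates beyond r+s are irrelevant (set to 0).\<close>
definition cvec :: "nat \<Rightarrow> nat \<Rightarrow> complex \<Rightarrow> nat list \<times> nat list \<Rightarrow> nat \<Rightarrow> complex" where
  "cvec r s \<delta> w j =
     (let L = fst w; R = snd w; t = r - psize L in
      if j < r - t then of_int (cont L (j + 1))
      else if j < r + t then 0
      else if j < r + s then of_int (cont R (j + 1 - r - t)) + \<delta>
      else 0)"

definition balanced :: "complex \<Rightarrow> nat list \<times> nat list \<Rightarrow> nat list \<times> nat list \<Rightarrow> bool" where
  "balanced \<delta> lam mu \<longleftrightarrow>
     (\<exists>f. bij_betw f (young (fst lam) - young (fst mu)) (young (snd lam) - young (snd mu)) \<and>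
          (\<forall>x \<in> young (fst lam) - young (fst mu). of_int (content x) + of_int (content (f x)) = - \<delta>)) \<and>
     (\<exists>g. bij_betw g (young (fst mu) - young (fst lam)) (young (snd mu) - young (snd lam)) \<and>
          (\<forall>x \<in> young (fst mu) - young (fst lam). of_int (content x) + of_int (content (g x)) = - \<delta>))"

text \<open>Polynomial functions with complex coefficients in the variables
  a 0, ..., a (n-1).  (Over the infinite field C, polynomials and polynomial
  functions are in bijection.)\<close>
inductive_set polyfun :: "nat \<Rightarrow> ((nat \<Rightarrow> complex) \<Rightarrow> complex) set" for n :: nat where
  pf_const: "(\<lambda>a. c) \<in> polyfun n"
| pf_var: "i < n \<Longrightarrow> (\<lambda>a. a i) \<in> polyfun n"
| pf_add: "p \<in> polyfun n \<Longrightarrow> q \<in> polyfun n \<Longrightarrow> (\<lambda>a. p a + q a) \<in> polyfun n"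
| pf_mult: "p \<in> polyfun n \<Longrightarrow> q \<in> polyfun n \<Longrightarrow> (\<lambda>a. p a * q a) \<in> polyfun n"

text \<open>Variables: x_i is coordinate i-1 (i = 1..r), y_j is coordinate r+j-1 (j = 1..s).\<close>
definition S_rs :: "nat \<Rightarrow> nat \<Rightarrow> ((nat \<Rightarrow> complex) \<Rightarrow> complex) set" where
  "S_rs r s = {p \<in> polyfun (r + s).
      (\<forall>\<sigma> a. \<sigma> permutes {..<r} \<longrightarrow> p (a \<circ> \<sigma>) = p a) \<and>
      (\<forall>\<sigma> a. \<sigma> permutes {r..<r + s} \<longrightarrow> p (a \<circ> \<sigma>) = p a) \<and>
      (0 < r \<and> 0 < s \<longrightarrow> (\<forall>a t u. p (a(r - 1 := t, r := - t)) = p (a(r - 1 := u, r := - u))))}"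

end

theory Submission
  imports Defs "HOL-Library.Multiset"
begin

(* Both sides are statements about multisets.  Writing X for the multiset of x-coordinates
   of the evaluation point and Y for the multiset of negated y-coordinates, the point of a
   weight has X = contents of [lambda^L] plus t zeros and Y = (-delta - contents of
   [lambda^R]) plus t zeros.  Since no diagonal meets both [lambda^L] - [mu^L] and
   [mu^L] - [lambda^L], delta-balancedness amounts to X_lambda + Y_mu = X_mu + Y_lambda.
   A polynomial in S_{r,s}[x;y] sees only this "supermultiset": after permuting, a pair
   x_i = -y_j can be moved to (x_r, y_1) and then replaced by (0, 0).  Conversely the
   supersymmetric sums sum_i q(x_i) - sum_j q(-y_j) lie in S_{r,s}[x;y], and taking
   q(z) = prod_{c in F} (z - c) they separate multisets. *)

lemma image_mset_mset_set_split:
  assumes "finite A"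
  shows "image_mset f (mset_set A) = image_mset f (mset_set (A \<inter> B)) + image_mset f (mset_set (A - B))"
  using assms by (metis Int_Diff_disjoint Int_Diff_Un finite_Diff finite_Int image_mset_union mset_set_Union)

lemma image_mset_mset_set_fun_upd:
  assumes "finite I" "i \<in> I"
  shows "image_mset (f(i := v)) (mset_set I) = add_mset v (image_mset f (mset_set I) - {#f i#})"
proof -
  have "mset_set I = add_mset i (mset_set (I - {i}))"
    using assms by (simp add: mset_set.remove)
  moreover have "image_mset (f(i := v)) (mset_set (I - {i})) = image_mset f (mset_set (I - {i}))"
    using assms by (intro image_mset_cong) auto
  ultimately show ?thesis by simp
qed

lemma ex_bij_betw_iff_image_mset_eq:
  assumes S: "finite S" and T: "finite T"
  shows "(\<exists>f. bij_betw f S T \<and> (\<forall>x\<in>S. h (f x) = g x)) \<longleftrightarrow>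
    image_mset g (mset_set S) = image_mset h (mset_set T)"
proof
  assume "\<exists>f. bij_betw f S T \<and> (\<forall>x\<in>S. h (f x) = g x)"
  then obtain f where f: "bij_betw f S T" "\<forall>x\<in>S. h (f x) = g x" by blast
  have "mset_set T = image_mset f (mset_set S)"
    using f(1) by (metis bij_betw_def image_mset_mset_set)
  moreover have "image_mset (h \<circ> f) (mset_set S) = image_mset g (mset_set S)"
    using f(2) S by (intro image_mset_cong) auto
  ultimately show "image_mset g (mset_set S) = image_mset h (mset_set T)"
    by (simp add: multiset.map_comp)
next
  assume eq: "image_mset g (mset_set S) = image_mset h (mset_set T)"
  have "card S = card T"
    using arg_cong[OF eq, of size] S T by simp
  then obtain e where e: "bij_betw e S T"
    using finite_same_card_bij S T by blast
  have "image_mset h (mset_set T) = image_mset (h \<circ> e) (mset_set S)"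
    using e by (metis bij_betw_def image_mset_mset_set multiset.map_comp)
  with eq obtain \<pi> where \<pi>: "\<pi> permutes S" "\<forall>x\<in>S. g x = h (e (\<pi> x))"
    using image_mset_eq_implies_permutes[OF S] by (metis comp_apply)
  have "bij_betw (e \<circ> \<pi>) S T"
    using permutes_imp_bij[OF \<pi>(1)] e by (rule bij_betw_trans)
  with \<pi>(2) show "\<exists>f. bij_betw f S T \<and> (\<forall>x\<in>S. h (f x) = g x)"
    by (intro exI[of _ "e \<circ> \<pi>"]) auto
qed

lemma add_eq_add_disjoint_cancel:
  fixes A B C D :: "'a multiset"
  assumes "A + B = C + D" "set_mset A \<inter> set_mset C = {}" "set_mset B \<inter> set_mset D = {}"
  shows "A = D \<and> B = C"
proof -
  have "count A x = count D x \<and> count B x = count C x" for x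
  proof -
    have "count A x + count B x = count C x + count D x"
      using assms(1) by (metis count_union)
    moreover have "count A x = 0 \<or> count C x = 0" "count B x = 0 \<or> count D x = 0"
      using assms(2,3) by (auto simp: disjoint_iff count_eq_zero_iff)
    ultimately show ?thesis by auto
  qed
  then show ?thesis by (simp add: multiset_eq_iff)
qed

lemma diff_eq_diff_if_add_eq:
  fixes A B C D :: "'a multiset"
  assumes "A + D = C + B"
  shows "A - B = C - D"
proof (rule multiset_eqI)
  fix x
  have "count A x + count D x = count C x + count B x"
    using assms by (metis count_union)
  then show "count (A - B) x = count (C - D) x" by simp
qed

lemma multiset_eq_if_root_prod_sums_eq:
  fixes M N :: "'a :: {idom, ring_char_0} multiset"
  assumes "\<And>F. finite F \<Longrightarrow> (\<Sum>z\<in>#M. \<Prod>c\<in>F. z - c) = (\<Sum>z\<in>#N. \<Prod>c\<in>F. z - c)"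
  shows "M = N"
proof (rule multiset_eqI)
  fix c0
  define F where "F = set_mset (M + N) - {c0}"
  have "(\<Prod>c\<in>F. c0 - c) \<noteq> 0"
    unfolding F_def by simp
  have sum_eq: "(\<Sum>z\<in>#K. \<Prod>c\<in>F. z - c) = of_nat (count K c0) * (\<Prod>c\<in>F. c0 - c)"
    if "set_mset K \<subseteq> set_mset (M + N)" for K
  proof -
    have "image_mset (\<lambda>z. \<Prod>c\<in>F. z - c) K =
        image_mset (\<lambda>z. if z = c0 then \<Prod>c\<in>F. c0 - c else 0) K"
      using that unfolding F_def by (intro image_mset_cong) auto
    then show ?thesis by (simp add: sum_mset_delta)
  qed
  have "of_nat (count M c0) * (\<Prod>c\<in>F. c0 - c) = of_nat (count N c0) * (\<Prod>c\<in>F. c0 - c)"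
    using assms[of F] sum_eq[of M] sum_eq[of N] unfolding F_def by simp
  with \<open>(\<Prod>c\<in>F. c0 - c) \<noteq> 0\<close> show "count M c0 = count N c0" by simp
qed

declare upt_Suc[simp del]

lemma set_row_reading: "set (row_reading \<nu>) = young \<nu>"
  unfolding row_reading_def young_def
  by (auto simp add: Suc_le_eq image_iff intro!: bexI)

lemma length_row_reading: "length (row_reading \<nu>) = psize \<nu>"
proof -
  have "map (\<lambda>a. \<nu> ! (a - 1)) [1..<Suc (length \<nu>)] = \<nu>"
    by (simp add: map_Suc_upt[symmetric] comp_def map_nth)
  then show ?thesis
    unfolding row_reading_def by (simp add: length_concat comp_def)
qed

lemma distinct_row_reading:
  assumes "is_partition \<nu>"
  shows "distinct (row_reading \<nu>)"
proof -
  let ?rows = "map (\<lambda>a. map (Pair a) [1..<Suc (\<nu> ! (a - 1))]) [1..<Suc (length \<nu>)]"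
  have pos: "0 < \<nu> ! (a - 1)" if "a \<in> set [1..<Suc (length \<nu>)]" for a
    using assms that unfolding is_partition_def by (auto intro!: nth_mem)
  have "removeAll [] ?rows = ?rows"
    using pos by (intro removeAll_id) (auto, fastforce)
  moreover have "inj_on (\<lambda>a. map (Pair a) [1..<Suc (\<nu> ! (a - 1))]) (set [1..<Suc (length \<nu>)])"
  proof (rule inj_onI)
    fix a a' assume a: "a \<in> set [1..<Suc (length \<nu>)]"
      and eq: "map (Pair a) [1..<Suc (\<nu> ! (a - 1))] = map (Pair a') [1..<Suc (\<nu> ! (a' - 1))]"
    have "(a, 1) \<in> set (map (Pair a) [1..<Suc (\<nu> ! (a - 1))])"
      using pos[OF a] by auto
    then show "a = a'" unfolding eq by auto
  qed
  ultimately show ?thesis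
    unfolding row_reading_def distinct_concat_iff by (auto simp: distinct_map inj_on_def)
qed

lemma mset_row_reading:
  assumes "is_partition \<nu>"
  shows "mset (row_reading \<nu>) = mset_set (young \<nu>)"
  using distinct_row_reading[OF assms] by (simp flip: set_row_reading add: mset_set_set)

lemma finite_young: "finite (young \<nu>)"
  by (metis List.finite_set set_row_reading)

lemma young_downward_closed:
  assumes "is_partition \<nu>" "(a', b') \<in> young \<nu>" "1 \<le> a" "a \<le> a'" "1 \<le> b" "b \<le> b'"
  shows "(a, b) \<in> young \<nu>"
proof -
  have sorted: "sorted_wrt (\<ge>) \<nu>"
    using assms(1) unfolding is_partition_def by simp
  have a': "a' \<le> length \<nu>" "b' \<le> \<nu> ! (a' - 1)"
    using assms(2) unfolding young_def by auto
  have "\<nu> ! (a' - 1) \<le> \<nu> ! (a - 1)"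
    using sorted_wrt_nth_less[OF sorted, of "a - 1" "a' - 1"] assms a'
    by (cases "a = a'") auto
  then show ?thesis
    using assms a' unfolding young_def by auto
qed

lemma content_young_diff_neq:
  assumes "is_partition \<nu>" "is_partition \<kappa>" "x \<in> young \<nu> - young \<kappa>" "y \<in> young \<kappa> - young \<nu>"
  shows "content x \<noteq> content y"
proof
  assume eq: "content x = content y"
  obtain a b a' b' where xy: "x = (a, b)" "y = (a', b')" by fastforce
  have pos: "1 \<le> a" "1 \<le> b" "1 \<le> a'" "1 \<le> b'"
    using assms(3,4) xy unfolding young_def by auto
  have diag: "int b - int a = int b' - int a'"
    using eq xy unfolding content_def by simp
  show False
  proof (cases "a \<le> a'")
    case True
    then have "(a, b) \<in> young \<kappa>"
      using young_downward_closed[OF assms(2), of a' b' a b] assms(4) xy diag pos by auto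
    then show False using assms(3) xy by auto
  next
    case False
    then have "(a', b') \<in> young \<nu>"
      using young_downward_closed[OF assms(1), of a b a' b'] assms(3) xy diag pos by auto
    then show False using assms(4) xy by auto
  qed
qed

section \<open>Balanced weights as an identity of content multisets\<close>

definition contents_mset :: "(nat \<times> nat) set \<Rightarrow> complex multiset" where
  "contents_mset D = image_mset (\<lambda>x. of_int (content x)) (mset_set D)"

definition dual_contents_mset :: "complex \<Rightarrow> (nat \<times> nat) set \<Rightarrow> complex multiset" where
  "dual_contents_mset \<delta> D = image_mset (\<lambda>x. - \<delta> - of_int (content x)) (mset_set D)"

lemma balanced_iff_contents_mset:
  assumes "is_partition lL" "is_partition lR" "is_partition mL" "is_partition mR"
  shows "balanced \<delta> (lL, lR) (mL, mR) \<longleftrightarrow>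
    contents_mset (young lL) + dual_contents_mset \<delta> (young mR) =
    contents_mset (young mL) + dual_contents_mset \<delta> (young lR)"
proof -
  have pairing_iff: "(\<exists>f. bij_betw f S T \<and> (\<forall>x\<in>S. of_int (content x) + of_int (content (f x)) = - \<delta>))
      \<longleftrightarrow> contents_mset S = dual_contents_mset \<delta> T" if "finite S" "finite T" for S T
  proof -
    have "\<And>x y. of_int (content x) + of_int (content y) = - \<delta> \<longleftrightarrow>
        - \<delta> - of_int (content y) = (of_int (content x) :: complex)"
      by (auto simp: algebra_simps)
    then show ?thesis
      unfolding contents_mset_def dual_contents_mset_def
      by (simp only: ex_bij_betw_iff_image_mset_eq[OF that, symmetric])
  qed
  have split: "contents_mset A = contents_mset (A \<inter> B) + contents_mset (A - B)"
    "dual_contents_mset \<delta> A = dual_contents_mset \<delta> (A \<inter> B) + dual_contents_mset \<delta> (A - B)"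
    if "finite A" for A B
    using that unfolding contents_mset_def dual_contents_mset_def
    by (simp_all add: image_mset_mset_set_split)
  let ?L1 = "contents_mset (young lL - young mL)" and ?L2 = "contents_mset (young mL - young lL)"
  let ?R1 = "dual_contents_mset \<delta> (young lR - young mR)"
  let ?R2 = "dual_contents_mset \<delta> (young mR - young lR)"
  have "balanced \<delta> (lL, lR) (mL, mR) \<longleftrightarrow> ?L1 = ?R1 \<and> ?L2 = ?R2"
    unfolding balanced_def fst_conv snd_conv by (simp add: pairing_iff finite_young)
  also have "\<dots> \<longleftrightarrow> ?L1 + ?R2 = ?L2 + ?R1"
  proof
    assume "?L1 + ?R2 = ?L2 + ?R1"
    moreover have "set_mset ?L1 \<inter> set_mset ?L2 = {}"
      unfolding contents_mset_def using content_young_diff_neq[OF assms(1,3)]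
      by (auto simp: finite_young)
    moreover have "set_mset ?R2 \<inter> set_mset ?R1 = {}"
      unfolding dual_contents_mset_def using content_young_diff_neq[OF assms(4,2)]
      by (auto simp: finite_young)
    ultimately show "?L1 = ?R1 \<and> ?L2 = ?R2"
      by (metis add_eq_add_disjoint_cancel)
  qed simp
  also have "\<dots> \<longleftrightarrow> contents_mset (young lL) + dual_contents_mset \<delta> (young mR) =
      contents_mset (young mL) + dual_contents_mset \<delta> (young lR)"
    using split[OF finite_young, of lL "young mL"] split[OF finite_young, of mL "young lL"]
      split[OF finite_young, of lR "young mR"] split[OF finite_young, of mR "young lR"]
    by (simp add: Int_commute ac_simps)
  finally show ?thesis .
qed

lemma polyfun_cong:
  assumes "p \<in> polyfun n" "\<forall>i<n. a i = b i"
  shows "p a = p b"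
  using assms by (induction rule: polyfun.induct) auto

lemma polyfun_diff:
  assumes "p \<in> polyfun n" "q \<in> polyfun n"
  shows "(\<lambda>a. p a - q a) \<in> polyfun n"
proof -
  have "(\<lambda>a. p a + (\<lambda>a. - 1) a * q a) \<in> polyfun n"
    using assms by (intro pf_add pf_mult pf_const)
  then show ?thesis by simp
qed

lemma polyfun_uminus:
  assumes "p \<in> polyfun n"
  shows "(\<lambda>a. - p a) \<in> polyfun n"
  using polyfun_diff[OF pf_const[of 0] assms] by simp

lemma polyfun_sum:
  "finite I \<Longrightarrow> (\<And>i. i \<in> I \<Longrightarrow> f i \<in> polyfun n) \<Longrightarrow> (\<lambda>a. \<Sum>i\<in>I. f i a) \<in> polyfun n"
proof (induction I rule: finite_induct)
  case (insert i I)
  then have "(\<lambda>a. f i a + (\<Sum>i\<in>I. f i a)) \<in> polyfun n"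
    by (intro pf_add[of "f i" n "\<lambda>a. \<Sum>i\<in>I. f i a", simplified]) auto
  then show ?case using insert by simp
qed (simp add: pf_const)

lemma polyfun_prod:
  "finite I \<Longrightarrow> (\<And>i. i \<in> I \<Longrightarrow> f i \<in> polyfun n) \<Longrightarrow> (\<lambda>a. \<Prod>i\<in>I. f i a) \<in> polyfun n"
proof (induction I rule: finite_induct)
  case (insert i I)
  then have "(\<lambda>a. f i a * (\<Prod>i\<in>I. f i a)) \<in> polyfun n"
    by (intro pf_mult[of "f i" n "\<lambda>a. \<Prod>i\<in>I. f i a", simplified]) auto
  then show ?case using insert by simp
qed (simp add: pf_const)

section \<open>Evaluations of S_{r,s}[x;y]\<close>

definition x_mset :: "nat \<Rightarrow> (nat \<Rightarrow> 'a) \<Rightarrow> 'a multiset" where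
  "x_mset r a = image_mset a (mset_set {..<r})"

definition neg_y_mset :: "nat \<Rightarrow> nat \<Rightarrow> (nat \<Rightarrow> 'a :: uminus) \<Rightarrow> 'a multiset" where
  "neg_y_mset r s a = image_mset (\<lambda>j. - a j) (mset_set {r..<r + s})"

lemma S_rs_cong:
  assumes "p \<in> S_rs r s" "\<forall>i<r + s. a i = b i"
  shows "p a = p b"
  using assms polyfun_cong unfolding S_rs_def by blast

lemma eq_if_permutation_invariant:
  assumes inv: "\<And>\<sigma> a. \<sigma> permutes I \<Longrightarrow> p (a \<circ> \<sigma>) = p a" and I: "finite I"
    and eq_on: "image_mset a (mset_set I) = image_mset b (mset_set I)"
    and eq_off: "\<And>j. j \<notin> I \<Longrightarrow> a j = b j"
  shows "p a = p b"
proof -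
  obtain \<sigma> where \<sigma>: "\<sigma> permutes I" "\<forall>j\<in>I. b j = a (\<sigma> j)"
    using image_mset_eq_implies_permutes[OF I eq_on[symmetric]] by blast
  have "b = a \<circ> \<sigma>"
    using \<sigma> eq_off permutes_not_in by fastforce
  then show ?thesis
    using inv[OF \<sigma>(1)] by simp
qed

lemma S_rs_eq_if_blocks_eq:
  assumes p: "p \<in> S_rs r s"
    and x: "x_mset r a = x_mset r b" and y: "neg_y_mset r s a = neg_y_mset r s b"
  shows "p a = p b"
proof -
  define c where "c j = (if j < r then b j else a j)" for j
  define d where "d j = (if j < r + s then b j else a j)" for j
  have inv_x: "p (f \<circ> \<sigma>) = p f" if "\<sigma> permutes {..<r}" for \<sigma> f
    using p that unfolding S_rs_def by blast
  have inv_y: "p (f \<circ> \<sigma>) = p f" if "\<sigma> permutes {r..<r + s}" for \<sigma> f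
    using p that unfolding S_rs_def by blast
  have "p a = p c"
  proof (rule eq_if_permutation_invariant[OF inv_x])
    have "image_mset c (mset_set {..<r}) = image_mset b (mset_set {..<r})"
      unfolding c_def by (intro image_mset_cong) auto
    then show "image_mset a (mset_set {..<r}) = image_mset c (mset_set {..<r})"
      using x unfolding x_mset_def by simp
  qed (auto simp: c_def)
  also have "p c = p d"
  proof (rule eq_if_permutation_invariant[OF inv_y])
    have "image_mset uminus (neg_y_mset r s f) = image_mset f (mset_set {r..<r + s})"
      for f :: "nat \<Rightarrow> complex"
      unfolding neg_y_mset_def by (simp add: multiset.map_comp comp_def)
    then have "image_mset a (mset_set {r..<r + s}) = image_mset b (mset_set {r..<r + s})"
      using y by metis
    moreover have "image_mset c (mset_set {r..<r + s}) = image_mset a (mset_set {r..<r + s})"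
      "image_mset d (mset_set {r..<r + s}) = image_mset b (mset_set {r..<r + s})"
      unfolding c_def d_def by (auto intro!: image_mset_cong)
    ultimately show "image_mset c (mset_set {r..<r + s}) = image_mset d (mset_set {r..<r + s})"
      by simp
  qed (auto simp: c_def d_def)
  also have "p d = p b"
    using p by (rule S_rs_cong) (simp add: d_def)
  finally show ?thesis .
qed

lemma S_rs_zero_pair:
  assumes p: "p \<in> S_rs r s" and ij: "i < r" "r \<le> j" "j < r + s" and aj: "a j = - a i"
  shows "p (a(i := 0, j := 0)) = p a"
proof -
  \<comment> \<open>Move x_i and y_j to the coordinates r - 1 and r, i.e. to x_r and y_1.\<close>
  let ?\<tau> = "transpose i (r - 1)" and ?\<upsilon> = "transpose j r"
  have "?\<tau> permutes {..<r}" "?\<upsilon> permutes {r..<r + s}"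
    using ij by (auto intro!: permutes_swap_id)
  then have inv: "p (f \<circ> ?\<tau> \<circ> ?\<upsilon>) = p f" for f
    using p unfolding S_rs_def by auto
  define b where "b = a \<circ> ?\<tau> \<circ> ?\<upsilon>"
  have b: "b (r - 1) = a i" "b r = a j"
    using ij by (auto simp: b_def transpose_def)
  have "a(i := 0, j := 0) \<circ> ?\<tau> \<circ> ?\<upsilon> = b(r - 1 := 0, r := - 0)"
    using ij by (auto simp: b_def transpose_def fun_eq_iff)
  then have "p (a(i := 0, j := 0)) = p (b(r - 1 := 0, r := - 0))"
    using inv by metis
  also have "\<dots> = p (b(r - 1 := a i, r := - a i))"
  proof -
    have "0 < r" "0 < s"
      using ij by linarith+
    then show ?thesis
      using p unfolding S_rs_def by blast
  qed
  also have "b(r - 1 := a i, r := - a i) = b"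
    using b aj by (metis fun_upd_triv)
  also have "p b = p a"
    unfolding b_def by (rule inv)
  finally show ?thesis .
qed

lemma S_rs_cancel_common_value:
  assumes p: "p \<in> S_rs r s"
    and x: "x_mset r a = add_mset c A" and y: "neg_y_mset r s a = add_mset c B"
  obtains a' where "p a' = p a" "x_mset r a' = add_mset 0 A" "neg_y_mset r s a' = add_mset 0 B"
proof -
  have "c \<in># x_mset r a" "c \<in># neg_y_mset r s a"
    using x y by simp_all
  then obtain i j where i: "i < r" "a i = c" and j: "r \<le> j" "j < r + s" "- a j = c"
    unfolding x_mset_def neg_y_mset_def by auto
  have "x_mset r (a(i := 0, j := 0)) = x_mset r (a(i := 0))"
    unfolding x_mset_def using j by (intro image_mset_cong) auto
  also have "\<dots> = add_mset 0 A"
    using image_mset_mset_set_fun_upd[of "{..<r}" i a 0] x i by (simp add: x_mset_def)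
  finally have x': "x_mset r (a(i := 0, j := 0)) = add_mset 0 A" .
  have "neg_y_mset r s (a(i := 0, j := 0)) = image_mset ((\<lambda>k. - a k)(j := 0)) (mset_set {r..<r + s})"
    unfolding neg_y_mset_def using i by (intro image_mset_cong) auto
  also have "\<dots> = add_mset 0 B"
    using image_mset_mset_set_fun_upd[of "{r..<r + s}" j "\<lambda>k. - a k" 0] y j
    by (simp add: neg_y_mset_def)
  finally have y': "neg_y_mset r s (a(i := 0, j := 0)) = add_mset 0 B" .
  have "a j = - a i"
    using i(2) j(3) by (metis minus_minus)
  then have "p (a(i := 0, j := 0)) = p a"
    using S_rs_zero_pair[OF p i(1) j(1,2)] by blast
  with x' y' that show ?thesis by blast
qed

lemma S_rs_eq_if_same_uncancelled_parts:
  assumes p: "p \<in> S_rs r s"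
  shows "x_mset r a = A + C \<Longrightarrow> neg_y_mset r s a = B + C \<Longrightarrow>
    x_mset r b = A + C' \<Longrightarrow> neg_y_mset r s b = B + C' \<Longrightarrow> size C = size C' \<Longrightarrow> p a = p b"
proof (induction C arbitrary: A B C' a b)
  case empty
  then show ?case using S_rs_eq_if_blocks_eq[OF p] by simp
next
  case (add c C)
  obtain c' C0 where C': "C' = add_mset c' C0"
    using add.prems(5) by (cases C') auto
  obtain a' where a': "p a' = p a" "x_mset r a' = add_mset 0 A + C" "neg_y_mset r s a' = add_mset 0 B + C"
    using S_rs_cancel_common_value[OF p, of a c "A + C" "B + C"] add.prems by auto
  obtain b' where b': "p b' = p b" "x_mset r b' = add_mset 0 A + C0" "neg_y_mset r s b' = add_mset 0 B + C0"
    using S_rs_cancel_common_value[OF p, of b c' "A + C0" "B + C0"] add.prems C' by auto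
  have "p a' = p b'"
    using add.IH[where A = "add_mset 0 A" and B = "add_mset 0 B" and C' = C0 and a = a' and b = b']
      a' b' add.prems(5) C' by simp
  with a' b' show ?case by simp
qed

lemma S_rs_eq_if_supermultisets_eq:
  assumes p: "p \<in> S_rs r s"
    and eq: "x_mset r a + neg_y_mset r s b = x_mset r b + neg_y_mset r s a"
  shows "p a = p b"
proof -
  let ?Xa = "x_mset r a" and ?Ya = "neg_y_mset r s a"
  let ?Xb = "x_mset r b" and ?Yb = "neg_y_mset r s b"
  have decomp: "X = (X - Y) + X \<inter># Y" "Y = (Y - X) + X \<inter># Y" for X Y :: "complex multiset"
    by (simp_all add: multiset_eq_iff min_def)
  have A: "?Xa - ?Ya = ?Xb - ?Yb"
    using eq by (rule diff_eq_diff_if_add_eq)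
  have B: "?Ya - ?Xa = ?Yb - ?Xb"
    using eq by (intro diff_eq_diff_if_add_eq) (simp add: ac_simps)
  have "size ?Xa = size ?Xb"
    unfolding x_mset_def by simp
  then have "size (?Xa \<inter># ?Ya) = size (?Xb \<inter># ?Yb)"
    using arg_cong[OF decomp(1)[of ?Xa ?Ya], of size] arg_cong[OF decomp(1)[of ?Xb ?Yb], of size] A
    by simp
  then show ?thesis
  proof (rule S_rs_eq_if_same_uncancelled_parts[OF p, rotated -1])
    show "?Xa = (?Xa - ?Ya) + ?Xa \<inter># ?Ya" "?Ya = (?Ya - ?Xa) + ?Xa \<inter># ?Ya"
      by (fact decomp)+
    show "?Xb = (?Xa - ?Ya) + ?Xb \<inter># ?Yb" "?Yb = (?Ya - ?Xa) + ?Xb \<inter># ?Yb"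
      unfolding A B by (fact decomp)+
  qed
qed

definition supersym_sum :: "complex set \<Rightarrow> nat \<Rightarrow> nat \<Rightarrow> (nat \<Rightarrow> complex) \<Rightarrow> complex" where
  "supersym_sum F r s a = (\<Sum>i<r. \<Prod>c\<in>F. a i - c) - (\<Sum>j\<in>{r..<r + s}. \<Prod>c\<in>F. - a j - c)"

lemma supersym_sum_in_S_rs:
  assumes F: "finite F"
  shows "supersym_sum F r s \<in> S_rs r s"
proof -
  let ?q = "\<lambda>z. \<Prod>c\<in>F. z - c"
  have "(\<lambda>a. ?q (a i)) \<in> polyfun (r + s)" "(\<lambda>a. ?q (- a i)) \<in> polyfun (r + s)" if "i < r + s" for i
    using F that by (auto intro!: polyfun_prod polyfun_diff polyfun_uminus pf_var pf_const)
  then have poly: "supersym_sum F r s \<in> polyfun (r + s)"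
    unfolding supersym_sum_def by (intro polyfun_diff polyfun_sum) auto
  have perm_x: "supersym_sum F r s (a \<circ> \<sigma>) = supersym_sum F r s a"
    if \<sigma>: "\<sigma> permutes {..<r}" for \<sigma> a
  proof -
    have "(\<Sum>j\<in>{r..<r + s}. ?q (- (a \<circ> \<sigma>) j)) = (\<Sum>j\<in>{r..<r + s}. ?q (- a j))"
      using permutes_not_in[OF \<sigma>] by (intro sum.cong) auto
    then show ?thesis
      unfolding supersym_sum_def using sum.permute[OF \<sigma>, of "\<lambda>i. ?q (a i)"] by (simp add: comp_def)
  qed
  have perm_y: "supersym_sum F r s (a \<circ> \<sigma>) = supersym_sum F r s a"
    if \<sigma>: "\<sigma> permutes {r..<r + s}" for \<sigma> a
  proof -
    have "(\<Sum>i<r. ?q ((a \<circ> \<sigma>) i)) = (\<Sum>i<r. ?q (a i))"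
      using permutes_not_in[OF \<sigma>] by (intro sum.cong) auto
    then show ?thesis
      unfolding supersym_sum_def using sum.permute[OF \<sigma>, of "\<lambda>j. ?q (- a j)"] by (simp add: comp_def)
  qed
  have cancel: "supersym_sum F r s (a(r - 1 := t, r := - t)) =
      (\<Sum>i<r - 1. ?q (a i)) - (\<Sum>j\<in>{Suc r..<r + s}. ?q (- a j))"
    if "0 < r" "0 < s" for a t
  proof -
    have r: "{..<r} = insert (r - 1) {..<r - 1}" and s: "{r..<r + s} = insert r {Suc r..<r + s}"
      using that by auto
    have "(\<Sum>i<r. ?q ((a(r - 1 := t, r := - t)) i)) = ?q t + (\<Sum>i<r - 1. ?q (a i))"
      unfolding r using that by (subst sum.insert) (auto intro!: sum.cong)
    moreover have "(\<Sum>j\<in>{r..<r + s}. ?q (- (a(r - 1 := t, r := - t)) j)) =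
        ?q t + (\<Sum>j\<in>{Suc r..<r + s}. ?q (- a j))"
      unfolding s by (subst sum.insert) (auto intro!: sum.cong)
    ultimately show ?thesis
      unfolding supersym_sum_def by simp
  qed
  show ?thesis
    unfolding S_rs_def using poly perm_x perm_y cancel by auto
qed

lemma supersym_sum_eq_sum_mset:
  "supersym_sum F r s a =
    (\<Sum>z\<in>#x_mset r a. \<Prod>c\<in>F. z - c) - (\<Sum>z\<in>#neg_y_mset r s a. \<Prod>c\<in>F. z - c)"
  unfolding supersym_sum_def x_mset_def neg_y_mset_def
  by (simp add: sum_unfold_sum_mset multiset.map_comp comp_def)

lemma supermultisets_eq_if_S_rs_eq:
  assumes "\<forall>p\<in>S_rs r s. p a = p b"
  shows "x_mset r a + neg_y_mset r s b = x_mset r b + neg_y_mset r s a"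
proof (rule multiset_eq_if_root_prod_sums_eq)
  fix F :: "complex set"
  assume "finite F"
  then have "supersym_sum F r s a = supersym_sum F r s b"
    using assms supersym_sum_in_S_rs by blast
  then show "(\<Sum>z\<in>#x_mset r a + neg_y_mset r s b. \<Prod>c\<in>F. z - c) =
      (\<Sum>z\<in>#x_mset r b + neg_y_mset r s a. \<Prod>c\<in>F. z - c)"
    unfolding supersym_sum_eq_sum_mset by (simp add: algebra_simps)
qed

theorem S_rs_eval_eq_iff:
  "(\<forall>p\<in>S_rs r s. p a = p b) \<longleftrightarrow> x_mset r a + neg_y_mset r s b = x_mset r b + neg_y_mset r s a"
  using S_rs_eq_if_supermultisets_eq[of _ r s a b] supermultisets_eq_if_S_rs_eq[of r s a b] by blast

section \<open>The evaluation point of a weight\<close>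

lemma LambdaD:
  assumes "(L, R) \<in> Lambda r s"
  shows "is_partition L" "is_partition R" "psize L \<le> r" "r - psize L \<le> s" "psize R = s - (r - psize L)"
  using assms unfolding Lambda_def by auto

lemma x_mset_cvec:
  assumes "(L, R) \<in> Lambda r s"
  shows "x_mset r (cvec r s \<delta> (L, R)) = contents_mset (young L) + replicate_mset (r - psize L) 0"
proof -
  note w = LambdaD[OF assms]
  have "map (cvec r s \<delta> (L, R)) [0..<r] =
      map (\<lambda>x. of_int (content x)) (row_reading L) @ replicate (r - psize L) 0"
    using w by (intro nth_equalityI) (auto simp: cvec_def Let_def nth_append length_row_reading cont_def)
  have "x_mset r (cvec r s \<delta> (L, R)) = mset (map (cvec r s \<delta> (L, R)) [0..<r])"
    by (simp add: x_mset_def atLeast0LessThan)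
  also have "\<dots> = contents_mset (young L) + replicate_mset (r - psize L) 0"
    unfolding \<open>map _ _ = _\<close> by (simp add: contents_mset_def mset_row_reading[OF w(1)])
  finally show ?thesis .
qed

lemma neg_y_mset_cvec:
  assumes "(L, R) \<in> Lambda r s"
  shows "neg_y_mset r s (cvec r s \<delta> (L, R)) = dual_contents_mset \<delta> (young R) + replicate_mset (r - psize L) 0"
proof -
  note w = LambdaD[OF assms]
  have "map (\<lambda>j. - cvec r s \<delta> (L, R) j) [r..<r + s] =
      replicate (r - psize L) 0 @ map (\<lambda>x. - \<delta> - of_int (content x)) (row_reading R)"
  proof (rule nth_equalityI)
    fix i
    assume "i < length (map (\<lambda>j. - cvec r s \<delta> (L, R) j) [r..<r + s])"
    moreover have "Suc (r + i) - r - (r - psize L) - 1 = i - (r - psize L)"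
      by simp
    ultimately show "map (\<lambda>j. - cvec r s \<delta> (L, R) j) [r..<r + s] ! i =
        (replicate (r - psize L) 0 @ map (\<lambda>x. - \<delta> - of_int (content x)) (row_reading R)) ! i"
      using w by (auto simp: cvec_def Let_def nth_append length_row_reading cont_def)
  qed (use w in \<open>simp add: length_row_reading\<close>)
  have "neg_y_mset r s (cvec r s \<delta> (L, R)) = mset (map (\<lambda>j. - cvec r s \<delta> (L, R) j) [r..<r + s])"
    by (simp add: neg_y_mset_def)
  also have "\<dots> = dual_contents_mset \<delta> (young R) + replicate_mset (r - psize L) 0"
    unfolding \<open>map _ _ = _\<close> by (simp add: dual_contents_mset_def mset_row_reading[OF w(2)])
  finally show ?thesis .
qed

theorem mainTheorem15:
  fixes r s :: nat and \<delta> :: complex and lamL lamR muL muR :: "nat list"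
  assumes "(lamL, lamR) \<in> Lambda r s" and "(muL, muR) \<in> Lambda r s"
  shows "balanced \<delta> (lamL, lamR) (muL, muR) \<longleftrightarrow>
    (\<forall>p \<in> S_rs r s. p (cvec r s \<delta> (lamL, lamR)) = p (cvec r s \<delta> (muL, muR)))"
proof -
  note lam = LambdaD[OF assms(1)] and mu = LambdaD[OF assms(2)]
  have "balanced \<delta> (lamL, lamR) (muL, muR) \<longleftrightarrow>
      contents_mset (young lamL) + dual_contents_mset \<delta> (young muR) =
      contents_mset (young muL) + dual_contents_mset \<delta> (young lamR)"
    by (rule balanced_iff_contents_mset[OF lam(1,2) mu(1,2)])
  also have "\<dots> \<longleftrightarrow>
      x_mset r (cvec r s \<delta> (lamL, lamR)) + neg_y_mset r s (cvec r s \<delta> (muL, muR)) =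
      x_mset r (cvec r s \<delta> (muL, muR)) + neg_y_mset r s (cvec r s \<delta> (lamL, lamR))"
    unfolding x_mset_cvec[OF assms(1)] x_mset_cvec[OF assms(2)]
      neg_y_mset_cvec[OF assms(1)] neg_y_mset_cvec[OF assms(2)]
    by (simp add: ac_simps)
  also have "\<dots> \<longleftrightarrow> (\<forall>p \<in> S_rs r s. p (cvec r s \<delta> (lamL, lamR)) = p (cvec r s \<delta> (muL, muR)))"
    by (rule S_rs_eval_eq_iff[symmetric])
  finally show ?thesis .
qed

end
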